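(* Fix $\sigma>0$ and let $\mathcal Q_{\sigma^2}$ be the set of all distributions $Q$ of real-valued processes $\{X_t\}_{t\in\mathbb N^+}$ such that, for some $\mu_Q\in\mathbb R$ and with respect to the natural filtration $\mathcal F_t=\sigma(X_1,\dots,X_t)$ ($\mathcal F_0$ trivial), $\mathbb E_Q[X_t\mid\mathcal F_{t-1}]=\mu_Q$ and $\mathbb E_Q[(X_t-\mu_Q)^2\mid\mathcal F_{t-1}]\le\sigma^2$ for all $t\in\mathbb N^+$. Let $\alpha,\varepsilon>0$ with $\alpha+2\varepsilon<1$, and fix $t\in\mathbb N^+$. For a tail-symmetric $(1-\alpha)$-CI $\{[\mathrm{lw}_t,\mathrm{up}_t]\}$ over $\mathcal Q_{\sigma^2}$ and $Q\in\mathcal Q_{\sigma^2}$, let $w^{Q,\varepsilon}_t$ be the number such that $\Pr_{\{X_i\}\sim Q}[\mathrm{up}_t-\mathrm{lw}_t\le w^{Q,\varepsilon}_t]=1-\varepsilon$, and define $$\mathcal M_t(\alpha,\varepsilon)=\inf_{[\mathrm{lw}_t,\mathrm{up}_t]}\ \sup_{Q\in\mathcal Q_{\sigma^2}}w^{Q,\varepsilon}_t,$$ the infimum being over all tail-symmetric $(1-\alpha)$-CIs over $\mathcal Q_{\sigma^2}$. Then, with $\Phi^{-1}$ the quantile function of the standard normal distribution, $$\mathcal M_t(\alpha,\varepsilon)\ge\frac{2\sigma}{\sqrt t}\Phi^{-1}(1-\alpha/2-\varepsilon)=\frac{2\sigma}{\sqrt t}\left(\sqrt{\log\frac{4}{(\alpha+2\varepsilon)^2}-\log\log\frac{4}{(\alpha+2\varepsilon)^2}-\log(2\pi)}+\mathcal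 O(1)\right),$$ where $\mathcal O(1)$ is with respect to $\alpha,\varepsilon\to0$.
   Context: A sequence of data-dependent intervals $\{[\mathrm{lw}_t,\mathrm{up}_t]\}_{t\in\mathbb N^+}$, with $\mathrm{lw}_t,\mathrm{up}_t:\mathbb R^t\to\mathbb R$, is a tail-symmetric $(1-\alpha)$-CI over a family $\mathcal Q$ of distributions over $\mathbb R^{\mathbb N^+}$ (each with mean $\mathbb E_Q[X_t]=\mu_Q$ independent of $t$) if for every $t\in\mathbb N^+$ and every $Q\in\mathcal Q$: $\Pr_{\{X_i\}\sim Q}[\mu_Q\le\mathrm{lw}_t(X_1,\dots,X_t)]\le\alpha/2$ and $\Pr_{\{X_i\}\sim Q}[\mu_Q\ge\mathrm{up}_t(X_1,\dots,X_t)]\le\alpha/2$. *)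

theory Defs
  imports "HOL-Probability.Probability" "HOL-Library.Landau_Symbols"
begin

text \<open>Path space of real-valued processes. The process X_1, X_2, ... is encoded
  as a path w :: nat => real with X_t = w (t - 1), for t >= 1.\<close>
definition path_space :: "(nat \<Rightarrow> real) measure" where
  "path_space = PiM UNIV (\<lambda>_. (borel :: real measure))"

text \<open>Natural filtration: natF Q n = sigma(X_1,...,X_n) = sigma(w 0, ..., w (n-1));
  natF Q 0 is the trivial sigma-algebra.\<close>
definition natF :: "(nat \<Rightarrow> real) measure \<Rightarrow> nat \<Rightarrow> (nat \<Rightarrow> real) measure" where
  "natF Q n = sigma (space Q)
     {(\<lambda>w. w i) -` A \<inter> space Q | i A. i < n \<and> A \<in> sets (borel :: real measure)}"

text \<open>Membership of the distribution Q (with mean mu) in the class Q_{sigma^2}: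
  conditional mean mu and conditional variance at most sigma^2 w.r.t. the natural
  filtration, for every t >= 1. (Square-integrability of X_t is part of making the
  conditional expectations meaningful; it is implied by the conditional variance bound.)\<close>
definition in_Qsig :: "real \<Rightarrow> (nat \<Rightarrow> real) measure \<Rightarrow> real \<Rightarrow> bool" where
  "in_Qsig \<sigma> Q \<mu> \<longleftrightarrow> prob_space Q \<and> sets Q = sets path_space \<and>
     (\<forall>t\<ge>1. integrable Q (\<lambda>w. (w (t - 1))\<^sup>2) \<and>
        (AE w in Q. real_cond_exp Q (natF Q (t - 1)) (\<lambda>w. w (t - 1)) w = \<mu>) \<and>
        (AE w in Q. real_cond_exp Q (natF Q (t - 1)) (\<lambda>w. (w (t - 1) - \<mu>)\<^sup>2) w \<le> \<sigma>\<^sup>2))"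

text \<open>Tail-symmetric (1-alpha)-CI over a family fam (given as a predicate on
  (distribution, mean) pairs). lw t, up t are Borel functions of X_1..X_t,
  encoded as measurable functions on path space depending only on w 0..w (t-1).\<close>
definition tail_sym_CI ::
  "((nat \<Rightarrow> real) measure \<Rightarrow> real \<Rightarrow> bool) \<Rightarrow> real \<Rightarrow>
   (nat \<Rightarrow> (nat \<Rightarrow> real) \<Rightarrow> real) \<Rightarrow> (nat \<Rightarrow> (nat \<Rightarrow> real) \<Rightarrow> real) \<Rightarrow> bool" where
  "tail_sym_CI fam \<alpha> lw up \<longleftrightarrow>
     (\<forall>t\<ge>1. lw t \<in> borel_measurable path_space \<and> up t \<in> borel_measurable path_space \<and>
        (\<forall>w w'. (\<forall>i<t. w i = w' i) \<longrightarrow> lw t w = lw t w' \<and> up t w = up t w')) \<and>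
     (\<forall>Q \<mu> t. fam Q \<mu> \<and> t \<ge> 1 \<longrightarrow>
        measure Q {w \<in> space Q. \<mu> \<le> lw t w} \<le> \<alpha> / 2 \<and>
        measure Q {w \<in> space Q. \<mu> \<ge> up t w} \<le> \<alpha> / 2)"

definition width_q ::
  "(nat \<Rightarrow> real) measure \<Rightarrow> real \<Rightarrow>
   (nat \<Rightarrow> (nat \<Rightarrow> real) \<Rightarrow> real) \<Rightarrow> (nat \<Rightarrow> (nat \<Rightarrow> real) \<Rightarrow> real) \<Rightarrow> nat \<Rightarrow> real" where
  "width_q Q \<epsilon> lw up t =
     Inf {c. 1 - \<epsilon> \<le> measure Q {w \<in> space Q. up t w - lw t w \<le> c}}"

definition minimax_width :: "real \<Rightarrow> real \<Rightarrow> real \<Rightarrow> nat \<Rightarrow> ereal" where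
  "minimax_width \<sigma> \<alpha> \<epsilon> t =
     Inf {Sup {ereal (width_q Q \<epsilon> lw up t) | Q \<mu>. in_Qsig \<sigma> Q \<mu>}
          | lw up. tail_sym_CI (in_Qsig \<sigma>) \<alpha> lw up}"

definition Phi :: "real \<Rightarrow> real" where
  "Phi x = measure (density lborel std_normal_density) {..x}"

definition Phi_inv :: "real \<Rightarrow> real" where
  "Phi_inv p = Inf {x. p \<le> Phi x}"

end

theory Submission
  imports Defs "HOL-Real_Asymp.Real_Asymp"
begin

(* Lower bound, by a two-point argument. I.i.d. N(mu, sigma^2) processes belong to Q_{sigma^2}.
   Suppose that under mean 0 the width up_t - lw_t is at most c < d with probability 1 - eps.
   The event {up_t - lw_t <= c, 0 < up_t} then has probability at least 1 - eps - alpha/2 under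
   mean 0; on it lw_t > -d, so under mean -d it has probability at most alpha/2. By Neyman-Pearson
   the two probabilities of an event determined by X_1, ..., X_t differ by at most
   2 Phi(d sqrt t / (2 sigma)) - 1, the extremal event being a half-space in X_1 + ... + X_t.
   Hence d >= 2 sigma / sqrt t * Phi^-1(1 - alpha/2 - eps).

   Asymptotics: for q = alpha/2 + eps and z = Phi^-1(1 - q), the Mills-ratio bounds
   phi(z) (1/z - 1/z^3) <= 1 - Phi(z) <= phi(z)/z give z^2 = ln(1/q^2) - 2 ln z - ln(2 pi) + O(1),
   and z^2 is of order ln(1/q^2), so 2 ln z = ln ln(1/q^2) + O(1). *)

section \<open>The standard normal distribution function\<close>

abbreviation phi :: "real \<Rightarrow> real" where
  "phi \<equiv> std_normal_density"

interpretation std_normal: real_distribution std_normal_distribution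
  by (rule real_dist_normal_dist)

lemma Phi_eq_cdf: "Phi = cdf std_normal_distribution"
  by (simp add: fun_eq_iff Phi_def cdf_def)

lemma Phi_mono: "x \<le> y \<Longrightarrow> Phi x \<le> Phi y"
  unfolding Phi_eq_cdf by (rule std_normal.cdf_nondecreasing)

lemma measure_std_normal_singleton: "measure std_normal_distribution {x} = 0"
proof -
  have "emeasure std_normal_distribution {x} = 0"
    by (subst emeasure_density) (auto intro!: nn_integral_null_set simp: null_sets_def)
  then show ?thesis by (simp add: measure_def)
qed

lemma isCont_Phi: "isCont Phi x"
  unfolding Phi_eq_cdf std_normal.isCont_cdf by (rule measure_std_normal_singleton)

lemma measure_std_normal_distribution:
  assumes A: "A \<in> sets borel"
  shows "measure std_normal_distribution A = (LINT x:A|lborel. phi x)"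
proof -
  have "emeasure std_normal_distribution A = (\<integral>\<^sup>+ x. ennreal (indicator A x * phi x) \<partial>lborel)"
    using A by (subst emeasure_density) (auto intro!: nn_integral_cong simp: indicator_def)
  also have "\<dots> = ennreal (LINT x:A|lborel. phi x)"
    unfolding set_lebesgue_integral_def
    using A integrable_mult_indicator[of A lborel phi] by (subst nn_integral_eq_integral) auto
  finally show ?thesis
    unfolding measure_def set_lebesgue_integral_def by (simp add: integral_nonneg_AE)
qed

lemma one_minus_Phi_eq_measure: "1 - Phi x = measure std_normal_distribution {x<..}"
proof -
  have "1 - Phi x = measure std_normal_distribution (UNIV - {..x})"
    using std_normal.prob_compl[of "{..x}"] by (simp add: Phi_def)
  also have "UNIV - {..x} = {x<..}" by auto
  finally show ?thesis .
qed

lemma one_minus_Phi_eq_measure_atLeast: "1 - Phi x = measure std_normal_distribution {x..}"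
proof -
  have "{x..} = {x} \<union> {x<..}" by auto
  then have "measure std_normal_distribution {x..} = measure std_normal_distribution {x<..}"
    using std_normal.finite_measure_Union[of "{x}" "{x<..}"] measure_std_normal_singleton by simp
  then show ?thesis by (simp add: one_minus_Phi_eq_measure)
qed

lemma one_minus_Phi: "1 - Phi x = (LINT u:{x<..}|lborel. phi u)"
  by (simp add: one_minus_Phi_eq_measure measure_std_normal_distribution)

lemma Phi_minus: "Phi (- x) = 1 - Phi x"
proof -
  have "Phi (- x) = (LINT u|lborel. indicator {x..} (- u) * phi u)"
    unfolding Phi_def measure_std_normal_distribution[OF atMost_borel] set_lebesgue_integral_def
    by (intro Bochner_Integration.integral_cong) (auto simp: indicator_def)
  also have "\<dots> = (LINT u|lborel. indicator {x..} u * phi u)"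
    using lborel_integral_real_affine[of "-1" "\<lambda>u. indicator {x..} u * phi u" 0]
    by (simp add: std_normal_density_def)
  finally show ?thesis
    by (simp add: one_minus_Phi_eq_measure_atLeast
      measure_std_normal_distribution set_lebesgue_integral_def)
qed

lemma Phi_0: "Phi 0 = 1 / 2"
  using Phi_minus[of 0] by simp

context
  fixes p :: real
  assumes p: "0 < p" "p < 1"
begin

lemma Phi_inv_set_nonempty: "{x. p \<le> Phi x} \<noteq> {}"
proof -
  have "eventually (\<lambda>x. p < Phi x) at_top"
    using p std_normal.cdf_lim_at_top_prob unfolding Phi_eq_cdf by (intro order_tendstoD) auto
  then obtain x where "p < Phi x" by (auto simp: eventually_at_top_linorder)
  then show ?thesis by (auto intro!: exI[of _ x])
qed

lemma Phi_inv_set_bdd_below: "bdd_below {x. p \<le> Phi x}"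
proof -
  have "eventually (\<lambda>x. Phi x < p) at_bot"
    using p std_normal.cdf_lim_at_bot unfolding Phi_eq_cdf by (intro order_tendstoD) auto
  then obtain b where b: "\<And>x. x \<le> b \<Longrightarrow> Phi x < p"
    by (auto simp: eventually_at_bot_linorder)
  have "b \<le> x" if "p \<le> Phi x" for x
    using b[of x] that by fastforce
  then show ?thesis by (auto intro!: bdd_belowI[of _ b])
qed

lemma Phi_inv_le: "p \<le> Phi y \<Longrightarrow> Phi_inv p \<le> y"
  unfolding Phi_inv_def by (rule cInf_lower[OF _ Phi_inv_set_bdd_below]) simp

lemma Phi_Phi_inv: "Phi (Phi_inv p) = p"
proof (rule antisym)
  have "closed {x. p \<le> Phi x}"
    using isCont_Phi by (intro closed_Collect_le continuous_intros)
      (auto simp: continuous_on_eq_continuous_at)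
  then have "Phi_inv p \<in> {x. p \<le> Phi x}"
    unfolding Phi_inv_def using Phi_inv_set_nonempty Phi_inv_set_bdd_below
    by (rule closed_contains_Inf[rotated 2])
  then show "p \<le> Phi (Phi_inv p)" by simp
  show "Phi (Phi_inv p) \<le> p"
  proof (rule ccontr)
    assume "\<not> Phi (Phi_inv p) \<le> p"
    then obtain d where d: "0 < d" and near: "\<And>y. dist y (Phi_inv p) < d \<Longrightarrow> p < Phi y"
      using isCont_Phi[of "Phi_inv p", unfolded continuous_at_eps_delta, rule_format,
          of "Phi (Phi_inv p) - p"]
      by (force simp: dist_real_def)
    have "p < Phi (Phi_inv p - d / 2)" using d by (intro near) (simp add: dist_real_def)
    then show False using Phi_inv_le[of "Phi_inv p - d / 2"] d by simp
  qed
qed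

end

lemma Phi_inv_pos:
  assumes "1 / 2 < p" "p < 1"
  shows "0 < Phi_inv p"
proof (rule ccontr)
  assume "\<not> 0 < Phi_inv p"
  then have "Phi (Phi_inv p) \<le> 1 / 2" using Phi_mono[of "Phi_inv p" 0] Phi_0 by simp
  then show False using Phi_Phi_inv[of p] assms by simp
qed

section \<open>Gaussian tails and the asymptotics of the quantile\<close>

lemma set_integral_greaterThan_FTC_nonneg:
  fixes F f :: "real \<Rightarrow> real"
  assumes deriv: "\<And>u. x < u \<Longrightarrow> (F has_real_derivative f u) (at u)"
    and cont: "\<And>u. x < u \<Longrightarrow> isCont f u"
    and nonneg: "\<And>u. x < u \<Longrightarrow> 0 \<le> f u"
    and F_x: "isCont F x" and F_top: "(F \<longlongrightarrow> 0) at_top"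
  shows "set_integrable lborel {x<..} f" and "(LINT u:{x<..}|lborel. f u) = - F x"
proof -
  have einterval: "einterval (ereal x) \<infinity> = {x<..}"
    by (auto simp: einterval_def)
  have lim_x: "((F \<circ> real_of_ereal) \<longlongrightarrow> F x) (at_right (ereal x))"
    unfolding ereal_tendsto_simps using F_x by (simp add: isCont_def filterlim_at_split)
  have lim_top: "((F \<circ> real_of_ereal) \<longlongrightarrow> 0) (at_left \<infinity>)"
    unfolding ereal_tendsto_simps using F_top by simp
  note FTC = interval_integral_FTC_nonneg[of "ereal x" \<infinity> F f, OF _ _ _ _ lim_x lim_top]
  show "set_integrable lborel {x<..} f" "(LINT u:{x<..}|lborel. f u) = - F x"
    using FTC deriv cont nonneg unfolding einterval interval_integral_to_infinity_eq by auto
qed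

lemma one_minus_Phi_le:
  assumes x: "0 < x"
  shows "1 - Phi x \<le> phi x / x"
proof -
  have deriv: "((\<lambda>u. - phi u) has_real_derivative u * phi u) (at u)" for u
    unfolding std_normal_density_def
    by (auto intro!: derivative_eq_intros simp: field_simps power2_eq_square)
  have lim: "((\<lambda>u. - phi u) \<longlongrightarrow> 0) at_top"
    unfolding std_normal_density_def by real_asymp
  note moment = set_integral_greaterThan_FTC_nonneg[of x "\<lambda>u. - phi u" "\<lambda>u. u * phi u", OF deriv _ _ _ lim]
  have "1 - Phi x = (LINT u:{x<..}|lborel. phi u)"
    by (rule one_minus_Phi)
  also have "\<dots> \<le> (LINT u:{x<..}|lborel. (1 / x) * (u * phi u))"
  proof (rule set_integral_mono)
    show "set_integrable lborel {x<..} phi"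
      unfolding set_integrable_def by (rule integrable_mult_indicator) auto
    show "set_integrable lborel {x<..} (\<lambda>u. 1 / x * (u * phi u))"
      using moment x by (intro set_integrable_mult_right) (auto simp: std_normal_density_def)
    fix u assume "u \<in> {x<..}"
    then have "1 * phi u \<le> (u / x) * phi u" using x by (intro mult_right_mono) auto
    then show "phi u \<le> 1 / x * (u * phi u)" by simp
  qed
  also have "\<dots> = phi x / x"
    using moment x by (subst set_integral_mult_right) (auto simp: std_normal_density_def)
  finally show ?thesis .
qed

lemma DERIV_phi_inverse_sub_inverse_cube:
  assumes u: "u \<noteq> 0"
  shows "((\<lambda>u. - (phi u * (1 / u - 1 / u ^ 3))) has_real_derivative phi u * (1 - 3 / u ^ 4)) (at u)"
proof -
  let ?g = "\<lambda>u. exp (- u\<^sup>2 / 2)"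
  have "((\<lambda>u. - (?g u * (1 / u - 1 / u ^ 3))) has_real_derivative
      - (?g u * (- (2 * u) / 2) * (1 / u - 1 / u ^ 3) + ?g u * (- 1 / u\<^sup>2 + 3 / u ^ 4))) (at u)"
    using u by (auto intro!: derivative_eq_intros
      simp: field_simps power2_eq_square power3_eq_cube power4_eq_xxxx)
  also have "- (?g u * (- (2 * u) / 2) * (1 / u - 1 / u ^ 3) + ?g u * (- 1 / u\<^sup>2 + 3 / u ^ 4))
      = ?g u * (1 - 3 / u ^ 4)"
    using u by (simp add: field_simps power2_eq_square power3_eq_cube power4_eq_xxxx)
  finally have "((\<lambda>u. - (?g u * (1 / u - 1 / u ^ 3))) has_real_derivative ?g u * (1 - 3 / u ^ 4)) (at u)" .
  from DERIV_cdivide[OF this, of "sqrt (2 * pi)"] show ?thesis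
    by (simp add: std_normal_density_def)
qed

lemma one_minus_Phi_ge:
  assumes x: "2 \<le> x"
  shows "phi x * (1 / x - 1 / x ^ 3) \<le> 1 - Phi x"
proof -
  let ?F = "\<lambda>u. - (phi u * (1 / u - 1 / u ^ 3))"
  let ?f = "\<lambda>u. phi u * (1 - 3 / u ^ 4)"
  have deriv: "(?F has_real_derivative ?f u) (at u)" if "x < u" for u
    using that x by (intro DERIV_phi_inverse_sub_inverse_cube) simp
  have nonneg: "0 \<le> ?f u" if "x < u" for u
  proof -
    have "(2::real) ^ 4 \<le> u ^ 4" using that x by (intro power_mono) auto
    then have "3 / u ^ 4 \<le> 1" by (simp add: divide_le_eq)
    then show ?thesis by (intro mult_nonneg_nonneg) auto
  qed
  have lim: "(?F \<longlongrightarrow> 0) at_top"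
    unfolding std_normal_density_def by real_asymp
  note FTC = set_integral_greaterThan_FTC_nonneg[of x ?F ?f, OF deriv _ nonneg _ lim]
  have "phi x * (1 / x - 1 / x ^ 3) = (LINT u:{x<..}|lborel. ?f u)"
    using FTC x by (simp add: std_normal_density_def)
  also have "\<dots> \<le> (LINT u:{x<..}|lborel. phi u)"
  proof (rule set_integral_mono)
    show "set_integrable lborel {x<..} ?f"
      using FTC x by (simp add: std_normal_density_def)
    show "set_integrable lborel {x<..} phi"
      unfolding set_integrable_def by (rule integrable_mult_indicator) auto
    fix u assume "u \<in> {x<..}"
    then show "?f u \<le> phi u" using x by (simp add: mult_left_le)
  qed
  also have "\<dots> = 1 - Phi x"
    by (rule one_minus_Phi[symmetric])
  finally show ?thesis .
qed

lemma Phi_less_1: "Phi x < 1"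
proof -
  define m where "m = max x 2"
  have m: "2 \<le> m" "x \<le> m" unfolding m_def by auto
  have "4 \<le> m\<^sup>2" using m power_mono[of 2 m 2] by simp
  then have "m * 1 < m * m\<^sup>2" using m by (intro mult_strict_left_mono) auto
  then have "1 / m ^ 3 < 1 / m" using m by (simp add: field_simps power2_eq_square power3_eq_cube)
  then have "0 < phi m * (1 / m - 1 / m ^ 3)" by (simp add: std_normal_density_def)
  then show ?thesis using one_minus_Phi_ge[OF m(1)] Phi_mono[OF m(2)] by linarith
qed

lemma ln_std_normal_density: "ln (phi z) = - z\<^sup>2 / 2 - ln (2 * pi) / 2"
  unfolding std_normal_density_def using pi_gt3 by (simp add: ln_div ln_sqrt)

lemma ln_one_minus_Phi_bounds:
  assumes z: "2 \<le> z"
  shows "z\<^sup>2 + 2 * ln z + ln (2 * pi) \<le> - 2 * ln (1 - Phi z)"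
    and "- 2 * ln (1 - Phi z) \<le> z\<^sup>2 + 2 * ln z + ln (2 * pi) + 2 * ln 2"
proof -
  have z0: "0 < z" and phi_z: "0 < phi z" using z by (auto simp: std_normal_density_def)
  have "phi z / (2 * z) \<le> phi z * (1 / z - 1 / z ^ 3)"
  proof -
    have "4 \<le> z\<^sup>2" using z power_mono[of 2 z 2] by simp
    then have "1 / (2 * z) \<le> 1 / z - 1 / z ^ 3"
      using z0 by (simp add: field_simps power2_eq_square power3_eq_cube)
    then show ?thesis using phi_z mult_left_mono[of "1 / (2 * z)" _ "phi z"] by simp
  qed
  then have lower: "phi z / (2 * z) \<le> 1 - Phi z"
    using one_minus_Phi_ge[OF z] by linarith
  have upper: "1 - Phi z \<le> phi z / z"
    using one_minus_Phi_le[OF z0] .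
  have q: "0 < 1 - Phi z"
    using Phi_less_1[of z] by simp
  have "ln (1 - Phi z) \<le> ln (phi z / z)"
    using upper q by (intro ln_mono) auto
  also have "\<dots> = ln (phi z) - ln z"
    using z0 phi_z by (simp add: ln_div)
  finally show "z\<^sup>2 + 2 * ln z + ln (2 * pi) \<le> - 2 * ln (1 - Phi z)"
    by (simp add: ln_std_normal_density)
  have "ln (phi z) - ln 2 - ln z = ln (phi z / (2 * z))"
    using z0 phi_z by (simp add: ln_div ln_mult)
  also have "\<dots> \<le> ln (1 - Phi z)"
    using lower z0 phi_z by (intro ln_mono) auto
  finally show "- 2 * ln (1 - Phi z) \<le> z\<^sup>2 + 2 * ln z + ln (2 * pi) + 2 * ln 2"
    by (simp add: ln_std_normal_density)
qed

lemma square_close_to_Phi_tail_log: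
  assumes z: "2 \<le> z" and small: "1 - Phi z \<le> 1 / (8 * pi)"
  defines "L \<equiv> ln (1 / (1 - Phi z)\<^sup>2)"
  shows "\<bar>z\<^sup>2 - (L - ln L - ln (2 * pi))\<bar> \<le> 2"
proof -
  have "0 < 1 - Phi z" using Phi_less_1[of z] by simp
  then have L: "L = - 2 * ln (1 - Phi z)"
    unfolding L_def by (simp add: ln_div ln_realpow)
  have bounds: "z\<^sup>2 + 2 * ln z + ln (2 * pi) \<le> L" "L \<le> z\<^sup>2 + 2 * ln z + ln (2 * pi) + 2 * ln 2"
    using ln_one_minus_Phi_bounds[OF z] unfolding L by simp_all
  have ln2: "0 < ln (2::real)" "ln (2::real) \<le> 1"
    using ln_le_minus_one[of 2] by auto
  have ln_2pi: "0 < ln (2 * pi)" using pi_gt3 by simp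
  have ln_8pi: "ln (8 * pi) = 2 * ln 2 + ln (2 * pi)"
    using ln_mult[of 4 "2 * pi"] ln_realpow[of 2 2] by simp
  have "ln (8 * pi) \<le> - ln (1 - Phi z)"
    using ln_mono[OF small \<open>0 < 1 - Phi z\<close>] pi_gt3 by (simp add: ln_div)
  then have L_big: "2 * ln (8 * pi) \<le> L" unfolding L by simp
  have ln_z: "ln 2 \<le> ln z" "ln z \<le> z\<^sup>2 / 4"
  proof -
    show "ln 2 \<le> ln z" using z by simp
    have "ln z \<le> z - 1" using z by (intro ln_le_minus_one) simp
    also have "\<dots> \<le> z\<^sup>2 / 4"
      using zero_le_power2[of "z - 2"] by (simp add: power2_eq_square algebra_simps)
    finally show "ln z \<le> z\<^sup>2 / 4" .
  qed
  have z_L: "z\<^sup>2 \<le> L" "L / 3 \<le> z\<^sup>2"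
    using bounds ln_z ln2 ln_2pi L_big ln_8pi by linarith+
  have "0 < z\<^sup>2" using z by simp
  then have "0 < L" using z_L by linarith
  have ln_z2: "2 * ln z = ln (z\<^sup>2)" using z by (simp add: ln_realpow)
  have "ln (z\<^sup>2) \<le> ln L" "ln (L / 3) \<le> ln (z\<^sup>2)"
    using z_L \<open>0 < z\<^sup>2\<close> \<open>0 < L\<close> by (auto intro: ln_mono)
  then have "2 * ln z \<le> ln L" "ln L - ln 3 \<le> 2 * ln z"
    unfolding ln_z2 using \<open>0 < L\<close> by (simp_all add: ln_div)
  moreover have "ln (3::real) \<le> 2" using ln_le_minus_one[of 3] by simp
  ultimately show ?thesis
    using bounds ln2 by linarith
qed

lemma abs_diff_sqrt_le_1:
  fixes z R :: real
  assumes z: "2 \<le> z" and close: "\<bar>z\<^sup>2 - R\<bar> \<le> 2"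
  shows "\<bar>z - sqrt R\<bar> \<le> 1"
proof -
  have "4 \<le> z\<^sup>2" using z power_mono[of 2 z 2] by simp
  then have R: "0 \<le> R" using close by linarith
  have "2 \<le> z + sqrt R" using z real_sqrt_ge_zero[OF R] by linarith
  then have "\<bar>z - sqrt R\<bar> * 2 \<le> \<bar>z - sqrt R\<bar> * (z + sqrt R)"
    by (intro mult_left_mono) auto
  also have "\<dots> = \<bar>(z - sqrt R) * (z + sqrt R)\<bar>"
    using \<open>2 \<le> z + sqrt R\<close> by (simp add: abs_mult)
  also have "(z - sqrt R) * (z + sqrt R) = z\<^sup>2 - R"
    using R by (simp add: power2_eq_square algebra_simps)
  finally have "\<bar>z - sqrt R\<bar> * 2 \<le> 2"
    using close by linarith
  then show ?thesis by simp
qed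

lemma Phi_inv_one_minus_approx:
  assumes q: "0 < q" "q < 1 - Phi 2" "q \<le> 1 / (8 * pi)"
  defines "L \<equiv> ln (1 / q\<^sup>2)"
  shows "\<bar>Phi_inv (1 - q) - sqrt (L - ln L - ln (2 * pi))\<bar> \<le> 1"
proof -
  define z where "z = Phi_inv (1 - q)"
  have "0 \<le> Phi 2" by (simp add: Phi_def)
  then have Phi_z: "Phi z = 1 - q"
    unfolding z_def using q by (intro Phi_Phi_inv) auto
  have z: "2 \<le> z"
  proof (rule ccontr)
    assume "\<not> 2 \<le> z"
    then show False using Phi_mono[of z 2] Phi_z q by simp
  qed
  have "\<bar>z\<^sup>2 - (L - ln L - ln (2 * pi))\<bar> \<le> 2"
    using square_close_to_Phi_tail_log[OF z] q unfolding Phi_z L_def by simp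
  then show ?thesis
    unfolding z_def using abs_diff_sqrt_le_1[OF z] z_def by simp
qed

lemma Phi_inv_asymptotics:
  "(\<lambda>(a, e). Phi_inv (1 - a / 2 - e)
          - sqrt (ln (4 / (a + 2 * e)\<^sup>2) - ln (ln (4 / (a + 2 * e)\<^sup>2)) - ln (2 * pi)))
        \<in> O[at_right 0 \<times>\<^sub>F at_right 0](\<lambda>_. 1)"
proof (rule bigoI[where c = 1])
  define d where "d = min (1 - Phi 2) (1 / (8 * pi))"
  have "0 < 1 - Phi 2" using Phi_less_1[of 2] by simp
  then have d: "0 < d" unfolding d_def using pi_gt3 by simp
  have "eventually (\<lambda>a. a \<in> {0<..<d}) (at_right (0::real))"
    "eventually (\<lambda>e. e \<in> {0<..<d / 2}) (at_right (0::real))"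
    using eventually_at_right_real[of 0 d] eventually_at_right_real[of 0 "d / 2"] d by auto
  then show "eventually (\<lambda>x. norm ((\<lambda>(a, e). Phi_inv (1 - a / 2 - e)
          - sqrt (ln (4 / (a + 2 * e)\<^sup>2) - ln (ln (4 / (a + 2 * e)\<^sup>2)) - ln (2 * pi))) x)
         \<le> 1 * norm ((\<lambda>_. 1::real) x)) (at_right 0 \<times>\<^sub>F at_right 0)"
    unfolding eventually_prod_filter
  proof (intro exI conjI allI impI)
    fix a e :: real assume a: "a \<in> {0<..<d}" and e: "e \<in> {0<..<d / 2}"
    define q where "q = a / 2 + e"
    have q_eq: "1 - a / 2 - e = 1 - q" "4 / (a + 2 * e)\<^sup>2 = 1 / q\<^sup>2"
      unfolding q_def by (simp_all add: field_simps power2_eq_square)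
    moreover have "0 < q" "q < 1 - Phi 2" "q \<le> 1 / (8 * pi)"
      using a e unfolding q_def d_def by auto
    ultimately show "norm ((\<lambda>(a, e). Phi_inv (1 - a / 2 - e)
          - sqrt (ln (4 / (a + 2 * e)\<^sup>2) - ln (ln (4 / (a + 2 * e)\<^sup>2)) - ln (2 * pi))) (a, e))
         \<le> 1 * norm ((\<lambda>_. 1::real) (a, e))"
      using Phi_inv_one_minus_approx[of q] by (simp only: prod.case q_eq) simp
  qed
qed


section \<open>The natural filtration and processes with i.i.d. coordinates\<close>

lemma space_path_space [simp]: "space path_space = UNIV"
  by (simp add: path_space_def space_PiM)

lemma space_natF: "space (natF Q n) = space Q"
  unfolding natF_def by (rule space_measure_of_conv)

lemma sets_natF:
  assumes "space Q = UNIV"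
  shows "sets (natF Q n)
    = sigma_sets UNIV {(\<lambda>w. w i) -` A | i A. i < n \<and> A \<in> sets (borel :: real measure)}"
  unfolding natF_def using assms by (subst sets_measure_of) auto

lemma subalgebra_natF:
  assumes Q: "sets Q = sets path_space"
  shows "subalgebra Q (natF Q n)"
proof -
  have space: "space Q = UNIV" using sets_eq_imp_space_eq[OF Q] by simp
  have "(\<lambda>w. w i) -` A \<in> sets Q" if "A \<in> sets borel" for i and A :: "real set"
  proof -
    have "(\<lambda>w::nat \<Rightarrow> real. w i) \<in> borel_measurable Q"
      by (simp add: measurable_cong_sets[OF Q refl] path_space_def)
    from measurable_sets[OF this that] show ?thesis by (simp add: space)
  qed
  then have "sigma_sets UNIV {(\<lambda>w. w i) -` A | i A. i < n \<and> A \<in> sets (borel :: real measure)}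
      \<subseteq> sets Q"
    using sets.top[of Q] space by (intro sets.sigma_sets_subset'[of _ Q]) auto
  then show ?thesis
    unfolding subalgebra_def using sets_natF[OF space] space_natF by auto
qed

lemma natF_set_eq_restrict_vimage:
  assumes "space Q = UNIV" and A: "A \<in> sets (natF Q n)"
  obtains C where "C \<in> sets (PiM {..<n} (\<lambda>_. borel :: real measure))"
    and "A = (\<lambda>w. restrict w {..<n}) -` C"
proof -
  let ?R = "\<lambda>w::nat \<Rightarrow> real. restrict w {..<n}"
  let ?V = "vimage_algebra UNIV ?R (PiM {..<n} (\<lambda>_. borel :: real measure))"
  have sets_V: "sets ?V = {?R -` C \<inter> UNIV | C. C \<in> sets (PiM {..<n} (\<lambda>_. borel :: real measure))}"
    by (intro sets_vimage_algebra2) (auto simp: space_PiM)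
  have "(\<lambda>w. w i) -` B \<in> sets ?V" if "i < n" "B \<in> sets borel" for i and B :: "real set"
  proof -
    let ?C = "{r \<in> space (PiM {..<n} (\<lambda>_. borel :: real measure)). r i \<in> B}"
    have "?C \<in> sets (PiM {..<n} (\<lambda>_. borel :: real measure))"
      using that by (intro sets_Collect_single) auto
    moreover have "(\<lambda>w. w i) -` B = ?R -` ?C \<inter> UNIV" using that by (auto simp: space_PiM)
    ultimately show ?thesis unfolding sets_V by blast
  qed
  then have "sigma_sets UNIV {(\<lambda>w. w i) -` B | i B. i < n \<and> B \<in> sets (borel :: real measure)}
      \<subseteq> sets ?V"
    using sets.top[of ?V] by (intro sets.sigma_sets_subset'[of _ ?V]) auto
  then have "A \<in> sets ?V" using A sets_natF[OF assms(1)] by auto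
  then show ?thesis unfolding sets_V using that by auto
qed

lemma path_set_eq_restrict_vimage:
  assumes B: "B \<in> sets path_space"
    and prefix: "\<And>w w'. (\<forall>i<t. w i = w' i) \<Longrightarrow> w \<in> B \<Longrightarrow> w' \<in> B"
  obtains C where "C \<in> sets (PiM {..<t} (\<lambda>_. borel :: real measure))"
    and "B = (\<lambda>w. restrict w {..<t}) -` C"
proof -
  define extend where "extend = (\<lambda>(r::nat \<Rightarrow> real) i. if i < t then r i else 0)"
  have "extend \<in> measurable (PiM {..<t} (\<lambda>_. borel :: real measure)) path_space"
    unfolding path_space_def extend_def
  proof (rule measurable_PiM_single')
    fix i :: nat
    show "(\<lambda>r::nat \<Rightarrow> real. if i < t then r i else 0) \<in> borel_measurable (PiM {..<t} (\<lambda>_. borel))"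
      by (cases "i < t")
        (auto intro: measurable_component_singleton[where M = "\<lambda>_. borel", simplified])
  qed (auto simp: space_PiM)
  from measurable_sets[OF this B]
  have C: "extend -` B \<inter> space (PiM {..<t} (\<lambda>_. borel :: real measure))
      \<in> sets (PiM {..<t} (\<lambda>_. borel))" .
  have "w \<in> B \<longleftrightarrow> extend (restrict w {..<t}) \<in> B" for w
    using prefix[of w "extend (restrict w {..<t})"] prefix[of "extend (restrict w {..<t})" w]
    by (auto simp: extend_def)
  then have "B = (\<lambda>w. restrict w {..<t}) -` (extend -` B \<inter> space (PiM {..<t} (\<lambda>_. borel)))"
    by (auto simp: space_PiM)
  with C show ?thesis by (rule that)
qed

definition iid_path :: "real measure \<Rightarrow> (nat \<Rightarrow> real) measure" where
  "iid_path M = PiM UNIV (\<lambda>_. M)"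

context real_distribution
begin

lemma sets_iid_path: "sets (iid_path M) = sets path_space"
  unfolding iid_path_def path_space_def by (intro sets_PiM_cong) auto

lemma space_iid_path [simp]: "space (iid_path M) = UNIV"
  using sets_eq_imp_space_eq[OF sets_iid_path] by simp

lemma measurable_iid_path_coordinate: "(\<lambda>w. w i) \<in> borel_measurable (iid_path M)"
  by (simp add: measurable_cong_sets[OF sets_iid_path refl] path_space_def)

lemma product_prob_space_iid: "product_prob_space (\<lambda>_::nat. M)"
  unfolding product_prob_space_def product_prob_space_axioms_def product_sigma_finite_def
  by (auto intro: prob_space_axioms prob_space_imp_sigma_finite)

lemma prob_space_iid_path: "prob_space (iid_path M)"
  unfolding iid_path_def by (intro prob_space_PiM prob_space_axioms)

lemma distr_iid_path_coordinate: "distr (iid_path M) borel (\<lambda>w. w i) = M"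
proof -
  interpret product_prob_space "\<lambda>_::nat. M" UNIV by (rule product_prob_space_iid)
  have "distr (iid_path M) borel (\<lambda>w. w i) = distr (iid_path M) M (\<lambda>w. w i)"
    by (intro distr_cong) auto
  also have "\<dots> = M"
    unfolding iid_path_def by (rule PiM_component) simp
  finally show ?thesis .
qed

lemma indep_vars_iid_path: "prob_space.indep_vars (iid_path M) (\<lambda>_. borel) (\<lambda>i w. w i) UNIV"
proof -
  interpret P: prob_space "iid_path M" by (rule prob_space_iid_path)
  have "(\<lambda>w::nat \<Rightarrow> real. \<lambda>i\<in>UNIV. w i) = (\<lambda>w. w)" by (simp add: fun_eq_iff)
  then have "distr (iid_path M) (PiM UNIV (\<lambda>_. borel)) (\<lambda>w. \<lambda>i\<in>UNIV. w i) = iid_path M"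
    using sets_iid_path by (simp add: distr_id2 path_space_def)
  also have "\<dots> = PiM UNIV (\<lambda>i. distr (iid_path M) borel (\<lambda>w. w i))"
    by (simp only: distr_iid_path_coordinate) (simp add: iid_path_def)
  finally show ?thesis
    by (subst P.indep_vars_iff_distr_eq_PiM) (auto simp: measurable_iid_path_coordinate)
qed

lemma
  fixes h :: "real \<Rightarrow> 'b::{banach, second_countable_topology}"
  assumes [measurable]: "h \<in> borel_measurable borel"
  shows integrable_iid_path_coordinate: "integrable (iid_path M) (\<lambda>w. h (w i)) \<longleftrightarrow> integrable M h"
    and integral_iid_path_coordinate: "(\<integral>w. h (w i) \<partial>iid_path M) = (\<integral>x. h x \<partial>M)"
  using integrable_distr_eq[of "\<lambda>w. w i" "iid_path M" borel h, OF measurable_iid_path_coordinate]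
    integral_distr[of "\<lambda>w. w i" "iid_path M" borel h, OF measurable_iid_path_coordinate]
  by (simp_all add: distr_iid_path_coordinate)

lemma cond_exp_iid_path_coordinate:
  assumes h [measurable]: "h \<in> borel_measurable borel" and int: "integrable M h"
  shows "AE w in iid_path M. real_cond_exp (iid_path M) (natF (iid_path M) k)
      (\<lambda>w. h (w k)) w = (\<integral>x. h x \<partial>M)"
proof -
  let ?P = "iid_path M"
  let ?c = "\<integral>x. h x \<partial>M"
  interpret P: prob_space ?P by (rule prob_space_iid_path)
  have sub: "subalgebra ?P (natF ?P k)" by (rule subalgebra_natF[OF sets_iid_path])
  interpret sigma_finite_subalgebra ?P "natF ?P k"
    using sub P.finite_measure_axioms
    by (intro finite_measure_subalgebra_is_sigma_finite)
       (simp add: finite_measure_subalgebra_def finite_measure_subalgebra_axioms_def)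
  have int_P: "integrable ?P (\<lambda>w. h (w k))" using int by (simp add: integrable_iid_path_coordinate)
  have past_future: "P.indep_var (PiM {..<k} (\<lambda>_. borel)) (\<lambda>w. restrict w {..<k})
      (PiM {k} (\<lambda>_. borel)) (\<lambda>w. restrict w {k})"
    using P.indep_var_restrict[OF indep_vars_iid_path, of "{..<k}" "{k}"] by simp
  show ?thesis
  proof (rule real_cond_exp_charact)
    fix A assume A: "A \<in> sets (natF ?P k)"
    obtain C where C: "C \<in> sets (PiM {..<k} (\<lambda>_. borel :: real measure))"
        and AC: "A = (\<lambda>w. restrict w {..<k}) -` C"
      using natF_set_eq_restrict_vimage[OF space_iid_path A] .
    have "P.indep_var borel (indicator C \<circ> (\<lambda>w. restrict w {..<k})) borel
        ((\<lambda>r. h (r k)) \<circ> (\<lambda>w. restrict w {k}))"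
      using C by (intro P.indep_var_compose[OF past_future]) auto
    moreover have "indicator C \<circ> (\<lambda>w. restrict w {..<k}) = (indicator A :: _ \<Rightarrow> real)"
      "(\<lambda>r. h (r k)) \<circ> (\<lambda>w. restrict w {k}) = (\<lambda>w. h (w k))"
      unfolding AC by (auto simp: fun_eq_iff indicator_def)
    ultimately have indep: "P.indep_var borel (indicator A :: _ \<Rightarrow> real) borel (\<lambda>w. h (w k))" by simp
    have "A \<in> sets ?P" using A sub by (auto simp: subalgebra_def)
    then have "integrable ?P (indicator A :: _ \<Rightarrow> real)"
      by (intro integrable_real_indicator) (auto simp: P.emeasure_eq_measure)
    then have "(\<integral>w. indicator A w * h (w k) \<partial>?P) = (\<integral>w. indicator A w \<partial>?P) * ?c"
      using P.indep_var_lebesgue_integral[OF indep _ int_P] by (simp add: integral_iid_path_coordinate)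
    then show "(LINT w:A|?P. h (w k)) = (LINT w:A|?P. ?c)"
      unfolding set_lebesgue_integral_def by simp
  qed (auto simp: int_P)
qed

lemma emeasure_iid_path_restrict_vimage:
  assumes C: "C \<in> sets (PiM {..<t} (\<lambda>_. borel :: real measure))"
  shows "emeasure (iid_path M) ((\<lambda>w. restrict w {..<t}) -` C) = emeasure (PiM {..<t} (\<lambda>_. M)) C"
proof -
  interpret product_prob_space "\<lambda>_::nat. M" UNIV by (rule product_prob_space_iid)
  have "C \<in> sets (PiM {..<t} (\<lambda>_. M))"
    using C sets_PiM_cong[of "{..<t}" "{..<t}" "\<lambda>_. M" "\<lambda>_. borel"] by simp
  moreover have "(\<lambda>w. restrict w {..<t}) -` C = prod_emb UNIV (\<lambda>_. M) {..<t} C"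
    by (simp add: prod_emb_def space_PiM)
  ultimately show ?thesis
    unfolding iid_path_def by (simp add: emeasure_PiM_emb')
qed

lemma in_Qsig_iid_path:
  assumes sq: "integrable M (\<lambda>x. x\<^sup>2)" and mean: "(\<integral>x. x \<partial>M) = \<mu>"
    and var: "(\<integral>x. (x - \<mu>)\<^sup>2 \<partial>M) \<le> \<sigma>\<^sup>2"
  shows "in_Qsig \<sigma> (iid_path M) \<mu>"
  unfolding in_Qsig_def
proof (intro conjI allI impI prob_space_iid_path sets_iid_path)
  fix t :: nat
  have int1: "integrable M (\<lambda>x. x)"
    using square_integrable_imp_integrable[of "\<lambda>x. x"] sq by simp
  have "integrable M (\<lambda>x. x\<^sup>2 - 2 * \<mu> * x + \<mu>\<^sup>2)"
    using sq int1 by (intro Bochner_Integration.integrable_add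
      Bochner_Integration.integrable_diff integrable_mult_right) auto
  then have int2: "integrable M (\<lambda>x. (x - \<mu>)\<^sup>2)"
    by (simp add: power2_diff algebra_simps)
  let ?P = "iid_path M" and ?F = "natF (iid_path M) (t - 1)"
  show "integrable ?P (\<lambda>w. (w (t - 1))\<^sup>2)"
    using integrable_iid_path_coordinate[of "\<lambda>x. x\<^sup>2" "t - 1"] sq by simp
  show "AE w in ?P. real_cond_exp ?P ?F (\<lambda>w. w (t - 1)) w = \<mu>"
    using cond_exp_iid_path_coordinate[where k = "t - 1", OF measurable_ident_sets[OF refl] int1]
    unfolding mean .
  have "AE w in ?P. real_cond_exp ?P ?F (\<lambda>w. (w (t - 1) - \<mu>)\<^sup>2) w = (\<integral>x. (x - \<mu>)\<^sup>2 \<partial>M)"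
    using cond_exp_iid_path_coordinate[where k = "t - 1", OF _ int2] by simp
  then show "AE w in ?P. real_cond_exp ?P ?F (\<lambda>w. (w (t - 1) - \<mu>)\<^sup>2) w \<le> \<sigma>\<^sup>2"
    by (rule eventually_mono) (use var in simp)
qed

end

section \<open>Testing two Gaussian means\<close>

definition normal_measure :: "real \<Rightarrow> real \<Rightarrow> real measure" where
  "normal_measure \<mu> \<sigma> = density lborel (normal_density \<mu> \<sigma>)"

lemma real_distribution_normal_measure: "0 < \<sigma> \<Longrightarrow> real_distribution (normal_measure \<mu> \<sigma>)"
  unfolding normal_measure_def real_distribution_def real_distribution_axioms_def
  by (auto intro: prob_space_normal_density)

lemma
  assumes \<sigma>: "0 < \<sigma>" and [measurable]: "h \<in> borel_measurable borel"
  shows integrable_normal_measure: "integrable (normal_measure \<mu> \<sigma>) h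
      \<longleftrightarrow> integrable lborel (\<lambda>x. normal_density \<mu> \<sigma> x * h x)"
    and integral_normal_measure: "(\<integral>x. h x \<partial>normal_measure \<mu> \<sigma>) = (\<integral>x. normal_density \<mu> \<sigma> x * h x \<partial>lborel)"
  unfolding normal_measure_def by (simp_all add: integrable_density integral_density)

lemma in_Qsig_iid_normal:
  assumes \<sigma>: "0 < \<sigma>"
  shows "in_Qsig \<sigma> (iid_path (normal_measure \<mu> \<sigma>)) \<mu>"
proof -
  interpret real_distribution "normal_measure \<mu> \<sigma>"
    using \<sigma> by (rule real_distribution_normal_measure)
  have var: "has_bochner_integral lborel (\<lambda>x. normal_density \<mu> \<sigma> x * (x - \<mu>)\<^sup>2) (\<sigma>\<^sup>2)"
    using normal_moment_even[OF \<sigma>, where k = 1 and \<mu> = \<mu>] by (simp add: power2_eq_square)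
  have mean: "has_bochner_integral lborel (\<lambda>x. normal_density \<mu> \<sigma> x * x) \<mu>"
    using normal_moment_nz_1[OF \<sigma>] .
  let ?f = "normal_density \<mu> \<sigma>"
  have "integrable lborel (\<lambda>x. ?f x * (x - \<mu>)\<^sup>2 + 2 * \<mu> * (?f x * x) - \<mu>\<^sup>2 * ?f x)"
    using integrable_normal_moment[OF \<sigma>, of \<mu> 2] integrable_normal_moment_nz_1[OF \<sigma>, of \<mu>]
      integrable_normal_density[OF \<sigma>, of \<mu>]
    by (intro Bochner_Integration.integrable_diff Bochner_Integration.integrable_add
      integrable_mult_right) auto
  then have "integrable lborel (\<lambda>x. ?f x * x\<^sup>2)"
    by (simp add: power2_diff algebra_simps)
  then show ?thesis
    using var mean \<sigma>
    by (intro in_Qsig_iid_path)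
       (simp_all add: integrable_normal_measure integral_normal_measure has_bochner_integral_integral_eq)
qed

definition gauss_density :: "real \<Rightarrow> real \<Rightarrow> nat \<Rightarrow> (nat \<Rightarrow> real) \<Rightarrow> real" where
  "gauss_density \<mu> \<sigma> t x = (\<Prod>i<t. normal_density \<mu> \<sigma> (x i))"

lemma gauss_density_nonneg: "0 \<le> gauss_density \<mu> \<sigma> t x"
  unfolding gauss_density_def by (intro prod_nonneg) auto

lemma borel_measurable_gauss_density [measurable]:
  "gauss_density \<mu> \<sigma> t \<in> borel_measurable (PiM {..<t} (\<lambda>_. lborel))"
  unfolding gauss_density_def
  by (intro borel_measurable_prod borel_measurable_normal_density[THEN measurable_compose[rotated]]
      measurable_component_singleton) auto

lemma PiM_normal_measure_eq_density:
  assumes \<sigma>: "0 < \<sigma>"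
  shows "PiM {..<t} (\<lambda>_. normal_measure \<mu> \<sigma>)
      = density (PiM {..<t} (\<lambda>_. lborel)) (\<lambda>x. ennreal (gauss_density \<mu> \<sigma> t x))"
proof -
  interpret N: product_sigma_finite "\<lambda>_. normal_measure \<mu> \<sigma>"
    unfolding product_sigma_finite_def
    using real_distribution_normal_measure[OF \<sigma>]
      by (auto intro: prob_space_imp_sigma_finite simp: real_distribution_def)
  interpret L: product_sigma_finite "\<lambda>_::nat. lborel :: real measure"
    unfolding product_sigma_finite_def by (auto intro: lborel.sigma_finite_measure_axioms)
  show ?thesis
  proof (rule N.PiM_eqI[symmetric])
    show "sets (density (PiM {..<t} (\<lambda>_. lborel)) (\<lambda>x. ennreal (gauss_density \<mu> \<sigma> t x)))
        = sets (PiM {..<t} (\<lambda>_. normal_measure \<mu> \<sigma>))"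
      by (simp, intro sets_PiM_cong) (auto simp: normal_measure_def)
    fix A assume "\<And>i. i \<in> {..<t} \<Longrightarrow> A i \<in> sets (normal_measure \<mu> \<sigma>)"
    then have A: "\<And>i. i \<in> {..<t} \<Longrightarrow> A i \<in> sets borel" by (simp add: normal_measure_def)
    have "emeasure (density (PiM {..<t} (\<lambda>_. lborel)) (\<lambda>x. ennreal (gauss_density \<mu> \<sigma> t x))) (PiE {..<t} A)
        = (\<integral>\<^sup>+ x. (\<Prod>i<t. ennreal (normal_density \<mu> \<sigma> (x i))
          * indicator (A i) (x i)) \<partial>PiM {..<t} (\<lambda>_. lborel))"
      using A unfolding gauss_density_def
      by (subst emeasure_density)
         (auto intro!: sets_PiM_I_finite nn_integral_cong
               simp: prod_ennreal prod.distrib space_PiM indicator_def PiE_iff)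
    also have "\<dots> = (\<Prod>i<t. \<integral>\<^sup>+ y. ennreal (normal_density \<mu> \<sigma> y) * indicator (A i) y \<partial>lborel)"
      using A by (intro L.product_nn_integral_prod) auto
    also have "\<dots> = (\<Prod>i<t. emeasure (normal_measure \<mu> \<sigma>) (A i))"
      unfolding normal_measure_def using A by (intro prod.cong refl, subst emeasure_density) auto
    finally show "emeasure (density (PiM {..<t} (\<lambda>_. lborel)) (\<lambda>x. ennreal (gauss_density \<mu> \<sigma> t x)))
        (PiE {..<t} A)
        = (\<Prod>i<t. emeasure (normal_measure \<mu> \<sigma>) (A i))" .
  qed simp
qed

lemma integrable_gauss_density:
  assumes \<sigma>: "0 < \<sigma>"
  shows "integrable (PiM {..<t} (\<lambda>_. lborel)) (gauss_density \<mu> \<sigma> t)"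
proof (rule integrableI_nonneg)
  interpret prob_space "PiM {..<t} (\<lambda>_. normal_measure \<mu> \<sigma>)"
    using real_distribution_normal_measure[OF \<sigma>]
    by (intro prob_space_PiM) (simp add: real_distribution_def)
  have "(\<integral>\<^sup>+ x. ennreal (gauss_density \<mu> \<sigma> t x) \<partial>PiM {..<t} (\<lambda>_. lborel))
      = emeasure (PiM {..<t} (\<lambda>_. normal_measure \<mu> \<sigma>)) (space (PiM {..<t} (\<lambda>_. lborel :: real measure)))"
    unfolding PiM_normal_measure_eq_density[OF \<sigma>]
      by (subst emeasure_density) (auto intro!: nn_integral_cong)
  also have "\<dots> = 1"
    using emeasure_space_1 by (simp add: space_PiM normal_measure_def)
  finally show "(\<integral>\<^sup>+ x. ennreal (gauss_density \<mu> \<sigma> t x) \<partial>PiM {..<t} (\<lambda>_. lborel)) < \<infinity>" by simp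
qed (auto simp: gauss_density_nonneg)

lemma measure_iid_normal_restrict_vimage:
  assumes \<sigma>: "0 < \<sigma>" and C: "C \<in> sets (PiM {..<t} (\<lambda>_. borel :: real measure))"
  shows "measure (iid_path (normal_measure \<mu> \<sigma>)) ((\<lambda>w. restrict w {..<t}) -` C)
    = (\<integral>x. indicator C x * gauss_density \<mu> \<sigma> t x \<partial>PiM {..<t} (\<lambda>_. lborel))"
proof -
  interpret real_distribution "normal_measure \<mu> \<sigma>"
    using \<sigma> by (rule real_distribution_normal_measure)
  have C': "C \<in> sets (PiM {..<t} (\<lambda>_. lborel :: real measure))"
    using C sets_PiM_cong[of "{..<t}" "{..<t}" "\<lambda>_. lborel" "\<lambda>_. borel"] by simp
  have "emeasure (iid_path (normal_measure \<mu> \<sigma>)) ((\<lambda>w. restrict w {..<t}) -` C)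
      = (\<integral>\<^sup>+ x. ennreal (indicator C x * gauss_density \<mu> \<sigma> t x) \<partial>PiM {..<t} (\<lambda>_. lborel))"
    unfolding emeasure_iid_path_restrict_vimage[OF C] PiM_normal_measure_eq_density[OF \<sigma>]
    using C' by (subst emeasure_density) (auto intro!: nn_integral_cong simp: indicator_def)
  also have "\<dots> = ennreal (\<integral>x. indicator C x * gauss_density \<mu> \<sigma> t x \<partial>PiM {..<t} (\<lambda>_. lborel))"
    using integrable_mult_indicator[OF C' integrable_gauss_density[OF \<sigma>]]
    by (intro nn_integral_eq_integral) (auto simp: gauss_density_nonneg)
  finally show ?thesis
    unfolding measure_def by (simp add: integral_nonneg_AE gauss_density_nonneg)
qed

lemma gauss_density_eq:
  "gauss_density \<mu> \<sigma> t x = (1 / sqrt (2 * pi * \<sigma>\<^sup>2)) ^ t * exp (- (\<Sum>i<t. (x i - \<mu>)\<^sup>2) / (2 * \<sigma>\<^sup>2))"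
proof -
  have "gauss_density \<mu> \<sigma> t x = (1 / sqrt (2 * pi * \<sigma>\<^sup>2)) ^ t * (\<Prod>i<t. exp (- (x i - \<mu>)\<^sup>2 / (2 * \<sigma>\<^sup>2)))"
    unfolding gauss_density_def normal_density_def by (simp only: prod.distrib prod_constant card_lessThan)
  also have "(\<Prod>i<t. exp (- (x i - \<mu>)\<^sup>2 / (2 * \<sigma>\<^sup>2))) = exp (\<Sum>i<t. - (x i - \<mu>)\<^sup>2 / (2 * \<sigma>\<^sup>2))"
    by (simp add: exp_sum)
  also have "(\<Sum>i<t. - (x i - \<mu>)\<^sup>2 / (2 * \<sigma>\<^sup>2)) = - (\<Sum>i<t. (x i - \<mu>)\<^sup>2) / (2 * \<sigma>\<^sup>2)"
    by (simp add: sum_divide_distrib sum_negf)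
  finally show ?thesis .
qed

lemma gauss_density_le_iff:
  assumes \<sigma>: "0 < \<sigma>" and ba: "b < a"
  shows "gauss_density b \<sigma> t x \<le> gauss_density a \<sigma> t x \<longleftrightarrow> real t * (a + b) / 2 \<le> (\<Sum>i<t. x i)"
proof -
  have "(\<Sum>i<t. (x i - b)\<^sup>2) - (\<Sum>i<t. (x i - a)\<^sup>2) = (\<Sum>i<t. (a - b) * (2 * x i - (a + b)))"
    by (subst sum_subtractf[symmetric], intro sum.cong refl) (simp add: power2_eq_square algebra_simps)
  also have "\<dots> = (a - b) * (2 * (\<Sum>i<t. x i) - real t * (a + b))"
    by (simp add: sum_distrib_left[symmetric] sum_subtractf)
  finally have diff: "(\<Sum>i<t. (x i - b)\<^sup>2) - (\<Sum>i<t. (x i - a)\<^sup>2)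
      = (a - b) * (2 * (\<Sum>i<t. x i) - real t * (a + b))" .
  have "gauss_density b \<sigma> t x \<le> gauss_density a \<sigma> t x \<longleftrightarrow> (\<Sum>i<t. (x i - a)\<^sup>2) \<le> (\<Sum>i<t. (x i - b)\<^sup>2)"
    using \<sigma> by (simp add: gauss_density_eq divide_le_cancel)
  also have "\<dots> \<longleftrightarrow> 0 \<le> (a - b) * (2 * (\<Sum>i<t. x i) - real t * (a + b))"
    unfolding diff[symmetric] by simp
  also have "\<dots> \<longleftrightarrow> real t * (a + b) / 2 \<le> (\<Sum>i<t. x i)"
    using ba by (simp add: zero_le_mult_iff mult.commute)
  finally show ?thesis .
qed

lemma integral_indicator_le_integral_nonneg_set:
  fixes f :: "'a \<Rightarrow> real"
  assumes f: "integrable N f" and C: "C \<in> sets N" and D: "D \<in> sets N"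
    and D_iff: "\<And>x. x \<in> space N \<Longrightarrow> x \<in> D \<longleftrightarrow> 0 \<le> f x"
  shows "(\<integral>x. indicator C x * f x \<partial>N) \<le> (\<integral>x. indicator D x * f x \<partial>N)"
proof (rule integral_mono)
  fix x assume "x \<in> space N"
  then show "indicator C x * f x \<le> indicator D x * f x"
    using D_iff[of x] by (cases "0 \<le> f x") (auto simp: indicator_def)
qed (use integrable_mult_indicator[OF C f] integrable_mult_indicator[OF D f] in simp_all)

text \<open>Neyman-Pearson: by \<open>gauss_density_le_iff\<close> the region where the likelihood ratio of the
  two product densities is at least 1 is a half-space in the sample sum.\<close>

lemma iid_normal_restrict_diff_le_halfspace:
  assumes \<sigma>: "0 < \<sigma>" and ba: "b < a" and C: "C \<in> sets (PiM {..<t} (\<lambda>_. borel :: real measure))"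
  defines "H \<equiv> {w. real t * (a + b) / 2 \<le> (\<Sum>i<t. w i)}"
  shows "measure (iid_path (normal_measure a \<sigma>)) ((\<lambda>w. restrict w {..<t}) -` C)
      - measure (iid_path (normal_measure b \<sigma>)) ((\<lambda>w. restrict w {..<t}) -` C)
    \<le> measure (iid_path (normal_measure a \<sigma>)) H - measure (iid_path (normal_measure b \<sigma>)) H"
proof -
  let ?N = "PiM {..<t} (\<lambda>_. lborel :: real measure)"
  let ?f = "\<lambda>x. gauss_density a \<sigma> t x - gauss_density b \<sigma> t x"
  let ?D = "{x \<in> space (PiM {..<t} (\<lambda>_. borel :: real measure)). real t * (a + b) / 2 \<le> (\<Sum>i<t. x i)}"
  have sets_N: "sets ?N = sets (PiM {..<t} (\<lambda>_. borel :: real measure))"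
    by (intro sets_PiM_cong) auto
  have D: "?D \<in> sets (PiM {..<t} (\<lambda>_. borel :: real measure))"
    by measurable
  have H: "H = (\<lambda>w. restrict w {..<t}) -` ?D"
    unfolding H_def by (auto simp: space_PiM)
  have int: "integrable ?N (gauss_density \<mu> \<sigma> t)" for \<mu>
    using \<sigma> by (rule integrable_gauss_density)
  have diff: "measure (iid_path (normal_measure a \<sigma>)) ((\<lambda>w. restrict w {..<t}) -` E)
      - measure (iid_path (normal_measure b \<sigma>)) ((\<lambda>w. restrict w {..<t}) -` E)
    = (\<integral>x. indicator E x * ?f x \<partial>?N)" if E: "E \<in> sets (PiM {..<t} (\<lambda>_. borel :: real measure))" for E
    using E sets_N integrable_mult_indicator[of E ?N, OF _ int] \<sigma>
    by (simp add: measure_iid_normal_restrict_vimage right_diff_distrib)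
  have "(\<integral>x. indicator C x * ?f x \<partial>?N) \<le> (\<integral>x. indicator ?D x * ?f x \<partial>?N)"
    using C D sets_N int gauss_density_le_iff[OF \<sigma> ba]
    by (intro integral_indicator_le_integral_nonneg_set) (auto simp: space_PiM)
  then show ?thesis
    unfolding H diff[OF C] diff[OF D] .
qed

lemma measure_iid_normal_sum_ge:
  assumes \<sigma>: "0 < \<sigma>" and t: "1 \<le> t"
  shows "measure (iid_path (normal_measure \<mu> \<sigma>)) {w. c \<le> (\<Sum>i<t. w i)}
    = 1 - Phi ((c - real t * \<mu>) / (\<sigma> * sqrt (real t)))"
proof -
  let ?P = "iid_path (normal_measure \<mu> \<sigma>)"
  let ?S = "\<lambda>w::nat \<Rightarrow> real. \<Sum>i<t. w i"
  let ?sd = "\<sigma> * sqrt (real t)"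
  interpret real_distribution "normal_measure \<mu> \<sigma>"
    using \<sigma> by (rule real_distribution_normal_measure)
  interpret P: prob_space ?P by (rule prob_space_iid_path)
  have sd: "0 < ?sd" using \<sigma> t by simp
  have "distributed ?P lborel (\<lambda>w. w i) (normal_density \<mu> \<sigma>)" for i
    using distr_iid_path_coordinate[of i] measurable_iid_path_coordinate[of i]
    by (simp add: distributed_def normal_measure_def distr_cong[OF refl sets_lborel[symmetric]])
  then have "distributed ?P lborel ?S (normal_density (\<Sum>i<t. \<mu>) (sqrt (\<Sum>i<t. \<sigma>\<^sup>2)))"
    using t \<sigma> P.indep_vars_subset[OF indep_vars_iid_path, of "{..<t}"]
    by (intro P.sum_indep_normal) (auto simp: lessThan_empty_iff)
  moreover have "(\<Sum>i<t. \<mu>) = real t * \<mu>" "sqrt (\<Sum>i<t. \<sigma>\<^sup>2) = ?sd"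
    using \<sigma> by (auto simp: real_sqrt_mult)
  ultimately have "distributed ?P lborel (\<lambda>w. (?S w - real t * \<mu>) / ?sd) std_normal_density"
    using P.normal_standard_normal_convert[OF sd] by simp
  then have "emeasure ?P ((\<lambda>w. (?S w - real t * \<mu>) / ?sd) -` {(c - real t * \<mu>) / ?sd..} \<inter> space ?P)
      = emeasure std_normal_distribution {(c - real t * \<mu>) / ?sd..}"
    by (subst distributed_emeasure) (auto simp: emeasure_density)
  moreover have "(\<lambda>w. (?S w - real t * \<mu>) / ?sd) -` {(c - real t * \<mu>) / ?sd..} \<inter> space ?P = {w. c \<le> ?S w}"
    using sd by (auto simp: divide_le_cancel)
  ultimately show ?thesis
    by (simp add: measure_def one_minus_Phi_eq_measure_atLeast)
qed

lemma iid_normal_restrict_diff_le_Phi: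
  assumes \<sigma>: "0 < \<sigma>" and t: "1 \<le> t" and ba: "b < a"
    and C: "C \<in> sets (PiM {..<t} (\<lambda>_. borel :: real measure))"
  shows "measure (iid_path (normal_measure a \<sigma>)) ((\<lambda>w. restrict w {..<t}) -` C)
      - measure (iid_path (normal_measure b \<sigma>)) ((\<lambda>w. restrict w {..<t}) -` C)
    \<le> 2 * Phi ((a - b) * sqrt (real t) / (2 * \<sigma>)) - 1"
proof -
  let ?c = "real t * (a + b) / 2" and ?z = "(a - b) * sqrt (real t) / (2 * \<sigma>)"
  have "real t / sqrt (real t) = sqrt (real t)" by (simp add: real_div_sqrt)
  moreover have "(?c - real t * a) / (\<sigma> * sqrt (real t)) = - ((a - b) / (2 * \<sigma>)) * (real t / sqrt (real t))"
    "(?c - real t * b) / (\<sigma> * sqrt (real t)) = (a - b) / (2 * \<sigma>) * (real t / sqrt (real t))"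
    using \<sigma> t by (simp_all add: field_simps)
  ultimately have "(?c - real t * a) / (\<sigma> * sqrt (real t)) = - ?z"
      "(?c - real t * b) / (\<sigma> * sqrt (real t)) = ?z"
    by simp_all
  then have "measure (iid_path (normal_measure a \<sigma>)) {w. ?c \<le> (\<Sum>i<t. w i)} = 1 - Phi (- ?z)"
    "measure (iid_path (normal_measure b \<sigma>)) {w. ?c \<le> (\<Sum>i<t. w i)} = 1 - Phi ?z"
    by (simp_all only: measure_iid_normal_sum_ge[OF \<sigma> t])
  then show ?thesis
    using iid_normal_restrict_diff_le_halfspace[OF \<sigma> ba C] Phi_minus[of ?z] by linarith
qed

section \<open>The minimax lower bound\<close>

lemma (in prob_space) tendsto_prob_le_at_top:
  fixes f :: "'a \<Rightarrow> real"
  assumes f: "f \<in> borel_measurable M"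
  shows "((\<lambda>c. prob {x \<in> space M. f x \<le> c}) \<longlongrightarrow> 1) at_top"
proof -
  interpret D: real_distribution "distr M borel f" using f by (rule real_distribution_distr)
  have "cdf (distr M borel f) = (\<lambda>c. prob {x \<in> space M. f x \<le> c})"
    using f by (simp add: fun_eq_iff cdf_def measure_distr vimage_def Int_def conj_commute)
  then show ?thesis using D.cdf_lim_at_top_prob by simp
qed

lemma tail_sym_CI_coverage_iid_normal:
  assumes \<sigma>: "0 < \<sigma>" and t: "1 \<le> t" and CI: "tail_sym_CI (in_Qsig \<sigma>) \<alpha> lw up"
  shows "measure (iid_path (normal_measure \<mu> \<sigma>)) {w. \<mu> \<le> lw t w} \<le> \<alpha> / 2"
    and "measure (iid_path (normal_measure \<mu> \<sigma>)) {w. up t w \<le> \<mu>} \<le> \<alpha> / 2"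
proof -
  let ?P = "iid_path (normal_measure \<mu> \<sigma>)"
  have "measure ?P {w \<in> space ?P. \<mu> \<le> lw t w} \<le> \<alpha> / 2 \<and> measure ?P {w \<in> space ?P. \<mu> \<ge> up t w} \<le> \<alpha> / 2"
    using CI t in_Qsig_iid_normal[OF \<sigma>, of \<mu>] unfolding tail_sym_CI_def by blast
  then show "measure ?P {w. \<mu> \<le> lw t w} \<le> \<alpha> / 2" "measure ?P {w. up t w \<le> \<mu>} \<le> \<alpha> / 2"
    by (simp_all add: real_distribution.space_iid_path[OF real_distribution_normal_measure[OF \<sigma>]])
qed

lemma tail_sym_CI_measurable:
  assumes CI: "tail_sym_CI fam \<alpha> lw up" and t: "1 \<le> t" and Q: "sets Q = sets path_space"
  shows "lw t \<in> borel_measurable Q" and "up t \<in> borel_measurable Q"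
  using CI t unfolding tail_sym_CI_def measurable_cong_sets[OF Q refl] by auto

lemma tail_sym_CI_event_eq_restrict_vimage:
  assumes CI: "tail_sym_CI fam \<alpha> lw up" and t: "1 \<le> t"
  obtains C where "C \<in> sets (PiM {..<t} (\<lambda>_. borel :: real measure))"
    and "{w. up t w - lw t w \<le> c \<and> 0 < up t w} = (\<lambda>w. restrict w {..<t}) -` C"
proof -
  let ?B = "{w. up t w - lw t w \<le> c \<and> 0 < up t w}"
  note [measurable] = tail_sym_CI_measurable[OF CI t refl]
  have "{w \<in> space path_space. up t w - lw t w \<le> c \<and> 0 < up t w} \<in> sets path_space"
    by measurable
  then have B: "?B \<in> sets path_space" by simp
  have prefix: "w' \<in> ?B" if "\<forall>i<t. w i = w' i" "w \<in> ?B" for w w'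
  proof -
    have "lw t w = lw t w' \<and> up t w = up t w'"
      using CI t that(1) unfolding tail_sym_CI_def by blast
    then show ?thesis using that(2) by simp
  qed
  obtain C where "C \<in> sets (PiM {..<t} (\<lambda>_. borel :: real measure))" and "?B = (\<lambda>w. restrict w {..<t}) -` C"
    by (rule path_set_eq_restrict_vimage[OF B prefix])
  then show ?thesis by (rule that)
qed

lemma tail_sym_CI_width_bound:
  assumes \<sigma>: "0 < \<sigma>" and t: "1 \<le> t" and CI: "tail_sym_CI (in_Qsig \<sigma>) \<alpha> lw up"
    and d: "0 < d" "c < d"
    and width: "1 - \<epsilon> \<le> measure (iid_path (normal_measure 0 \<sigma>)) {w. up t w - lw t w \<le> c}"
  shows "1 - \<alpha> / 2 - \<epsilon> / 2 \<le> Phi (d * sqrt (real t) / (2 * \<sigma>))"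
proof -
  let ?P = "\<lambda>\<mu>. iid_path (normal_measure \<mu> \<sigma>)"
  let ?B = "{w. up t w - lw t w \<le> c \<and> 0 < up t w}"
    \<comment> \<open>on this event \<open>-d < lw t w\<close>: it is likely under mean 0 but rare under mean \<open>-d\<close>\<close>
  note coverage = tail_sym_CI_coverage_iid_normal[OF \<sigma> t CI]
  note P = real_distribution_normal_measure[OF \<sigma>]
  interpret P0: prob_space "?P 0" using P by (rule real_distribution.prob_space_iid_path)
  interpret Pd: prob_space "?P (- d)" using P by (rule real_distribution.prob_space_iid_path)
  note [measurable] = tail_sym_CI_measurable[OF CI t real_distribution.sets_iid_path[OF P]]
  have "{w \<in> space (?P \<mu>). up t w - lw t w \<le> c \<and> 0 < up t w} \<in> sets (?P \<mu>)"
    "{w \<in> space (?P \<mu>). up t w \<le> 0} \<in> sets (?P \<mu>)" "{w \<in> space (?P \<mu>). - d \<le> lw t w} \<in> sets (?P \<mu>)"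
    for \<mu> by measurable
  then have sets: "?B \<in> sets (?P \<mu>)" "{w. up t w \<le> 0} \<in> sets (?P \<mu>)" "{w. - d \<le> lw t w} \<in> sets (?P \<mu>)"
    for \<mu> by (simp_all add: real_distribution.space_iid_path[OF P])
  obtain C where C: "C \<in> sets (PiM {..<t} (\<lambda>_. borel :: real measure))"
    and BC: "?B = (\<lambda>w. restrict w {..<t}) -` C"
    by (rule tail_sym_CI_event_eq_restrict_vimage[OF CI t])
  have "{w. up t w - lw t w \<le> c} \<subseteq> ?B \<union> {w. up t w \<le> 0}" by auto
  then have "1 - \<epsilon> \<le> measure (?P 0) (?B \<union> {w. up t w \<le> 0})"
    using width sets by (auto intro: order_trans[OF _ P0.finite_measure_mono])
  also have "\<dots> \<le> measure (?P 0) ?B + \<alpha> / 2"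
    using measure_Un_le[OF sets(1,2)[of 0]] coverage(2)[of 0] by linarith
  finally have B0: "1 - \<epsilon> - \<alpha> / 2 \<le> measure (?P 0) ?B" by simp
  have "?B \<subseteq> {w. - d \<le> lw t w}" using d by auto
  then have "measure (?P (- d)) ?B \<le> measure (?P (- d)) {w. - d \<le> lw t w}"
    using sets by (intro Pd.finite_measure_mono)
  also have "\<dots> \<le> \<alpha> / 2" by (rule coverage(1))
  finally have Bd: "measure (?P (- d)) ?B \<le> \<alpha> / 2" .
  have "measure (?P 0) ?B - measure (?P (- d)) ?B \<le> 2 * Phi ((0 - - d) * sqrt (real t) / (2 * \<sigma>)) - 1"
    unfolding BC using d by (intro iid_normal_restrict_diff_le_Phi[OF \<sigma> t _ C]) auto
  then show ?thesis using B0 Bd by simp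
qed

lemma width_q_iid_normal_ge:
  assumes \<sigma>: "0 < \<sigma>" and \<alpha>: "0 < \<alpha>" and \<epsilon>: "0 < \<epsilon>" and \<alpha>\<epsilon>: "\<alpha> + 2 * \<epsilon> < 1" and t: "1 \<le> t"
    and CI: "tail_sym_CI (in_Qsig \<sigma>) \<alpha> lw up"
  shows "2 * \<sigma> / sqrt (real t) * Phi_inv (1 - \<alpha> / 2 - \<epsilon>)
      \<le> width_q (iid_path (normal_measure 0 \<sigma>)) \<epsilon> lw up t"
proof -
  let ?P = "iid_path (normal_measure 0 \<sigma>)"
  let ?p = "1 - \<alpha> / 2 - \<epsilon>"
  let ?K = "{c. 1 - \<epsilon> \<le> measure ?P {w \<in> space ?P. up t w - lw t w \<le> c}}"
  define bd where "bd = 2 * \<sigma> / sqrt (real t) * Phi_inv ?p"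
  interpret real_distribution "normal_measure 0 \<sigma>"
    using \<sigma> by (rule real_distribution_normal_measure)
  interpret P: prob_space ?P by (rule prob_space_iid_path)
  have p: "1 / 2 < ?p" "?p < 1" using \<alpha> \<epsilon> \<alpha>\<epsilon> by auto
  have bd: "0 < bd" unfolding bd_def using \<sigma> t Phi_inv_pos[OF p] by simp
  have "(\<lambda>w. up t w - lw t w) \<in> borel_measurable ?P"
    using CI t unfolding tail_sym_CI_def by (auto simp: measurable_cong_sets[OF sets_iid_path refl])
  from P.tendsto_prob_le_at_top[OF this]
  have "eventually (\<lambda>c. 1 - \<epsilon> < measure ?P {w \<in> space ?P. up t w - lw t w \<le> c}) at_top"
    using \<epsilon> by (intro order_tendstoD) auto
  then have K: "?K \<noteq> {}" by (auto simp: eventually_at_top_linorder intro: less_imp_le)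
  have "bd \<le> c" if c: "c \<in> ?K" for c
  proof (rule ccontr)
    assume "\<not> bd \<le> c"
    define d where "d = (max c 0 + bd) / 2"
    have d: "0 < d" "c < d" "d < bd" using \<open>\<not> bd \<le> c\<close> bd unfolding d_def by auto
    have "1 - \<alpha> / 2 - \<epsilon> / 2 \<le> Phi (d * sqrt (real t) / (2 * \<sigma>))"
      using tail_sym_CI_width_bound[OF \<sigma> t CI d(1,2), where \<epsilon> = \<epsilon>] c by simp
    then have "?p \<le> Phi (d * sqrt (real t) / (2 * \<sigma>))"
      using \<epsilon> by linarith
    then have "Phi_inv ?p \<le> d * sqrt (real t) / (2 * \<sigma>)"
      using p by (intro Phi_inv_le) auto
    then have "bd \<le> d" unfolding bd_def using \<sigma> t by (simp add: field_simps)
    then show False using d by simp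
  qed
  then have "bd \<le> Inf ?K" using K by (intro cInf_greatest) auto
  then show ?thesis unfolding width_q_def bd_def .
qed

theorem proposition1:
  fixes \<sigma> \<alpha> \<epsilon> :: real and t :: nat
  assumes "\<sigma> > 0" and "\<alpha> > 0" and "\<epsilon> > 0" and "\<alpha> + 2 * \<epsilon> < 1" and "t \<ge> 1"
  shows "ereal (2 * \<sigma> / sqrt (real t) * Phi_inv (1 - \<alpha> / 2 - \<epsilon>)) \<le> minimax_width \<sigma> \<alpha> \<epsilon> t
    \<and> (\<lambda>(a, e). Phi_inv (1 - a / 2 - e)
          - sqrt (ln (4 / (a + 2 * e)\<^sup>2) - ln (ln (4 / (a + 2 * e)\<^sup>2)) - ln (2 * pi)))
        \<in> O[at_right 0 \<times>\<^sub>F at_right 0](\<lambda>_. 1)"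
proof
  show "ereal (2 * \<sigma> / sqrt (real t) * Phi_inv (1 - \<alpha> / 2 - \<epsilon>)) \<le> minimax_width \<sigma> \<alpha> \<epsilon> t"
    unfolding minimax_width_def
  proof (rule Inf_greatest)
    fix X assume "X \<in> {Sup {ereal (width_q Q \<epsilon> lw up t) | Q \<mu>. in_Qsig \<sigma> Q \<mu>}
        | lw up. tail_sym_CI (in_Qsig \<sigma>) \<alpha> lw up}"
    then obtain lw up where X: "X = Sup {ereal (width_q Q \<epsilon> lw up t) | Q \<mu>. in_Qsig \<sigma> Q \<mu>}"
      and CI: "tail_sym_CI (in_Qsig \<sigma>) \<alpha> lw up" by blast
    have "ereal (2 * \<sigma> / sqrt (real t) * Phi_inv (1 - \<alpha> / 2 - \<epsilon>))
        \<le> ereal (width_q (iid_path (normal_measure 0 \<sigma>)) \<epsilon> lw up t)"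
      using width_q_iid_normal_ge[OF assms CI] by simp
    also have "\<dots> \<le> X"
      unfolding X using in_Qsig_iid_normal[OF assms(1), of 0] by (intro Sup_upper) blast
    finally show "ereal (2 * \<sigma> / sqrt (real t) * Phi_inv (1 - \<alpha> / 2 - \<epsilon>)) \<le> X" .
  qed
  show "(\<lambda>(a, e). Phi_inv (1 - a / 2 - e)
          - sqrt (ln (4 / (a + 2 * e)\<^sup>2) - ln (ln (4 / (a + 2 * e)\<^sup>2)) - ln (2 * pi)))
        \<in> O[at_right 0 \<times>\<^sub>F at_right 0](\<lambda>_. 1)"
    by (rule Phi_inv_asymptotics)
qed

end
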